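(* Let $d\ge2$, let $(k_\infty,\sigma_\infty)\in\Xi^d$, and let $(k_n,\sigma_n)_{n\in\mathbb{N}}$ be a sequence in $\Xi^d$ converging to $(k_\infty,\sigma_\infty)$. Let $f\in\ell^1(\mathbb{Z}^d)$. Then the sequence $\big(\pi_{k_n,\sigma_n}(\upsilon_{k_n}(f))\big)_{n\in\mathbb{N}}$ converges to $\pi_{k_\infty,\sigma_\infty}(\upsilon_{k_\infty}(f))$ in the strong operator topology on $\ell^2(\mathbb{Z}^d)$.
   Context: $\mathbb{N}_\ast=\{2,3,\ldots\}$, $\overline{\mathbb{N}}_\ast=\mathbb{N}_\ast\cup\{\infty\}$ (one-point compactification). For $k\in\overline{\mathbb{N}}_\ast^d$: $k\mathbb{Z}^d=\prod_jk_j\mathbb{Z}$ with $\infty\mathbb{Z}=\{0\}$, $\mathbb{Z}^d_k=\mathbb{Z}^d/k\mathbb{Z}^d$, $q_k$ the canonical surjection. A skew-bicharacter of $\mathbb{Z}^d_k$ is a bicharacter $\sigma$ into the unit circle with $\sigma(n,m)=\overline{\sigma(m,n)}$, identified with its lift $\sigma\circ(q_k\times q_k)$ to $\mathbb{Z}^d$. $\Xi^d$ is the set of pairs $(k,\sigma)$ ($k\in\overline{\mathbb{N}}_\ast^d$, $\sigma$ skew-bicharacter of $\mathbb{Z}^d_k$), topologized as a subspace of $\overline{\mathbb{N}}_\ast^d\times\{\text{skew-bicharacters of }\mathbb{Z}^d\}$, product topology with pointwise convergence on the second factor. On $\ell^2(\mathbb{Z}^d_k)$ let $U^n_{k,\sigma}e_m=\sigma(m,n)e_{m-n}$,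 $\rho_{k,\sigma}(g)=\sum_ng(n)U^n_{k,\sigma}$ for $g\in\ell^1(\mathbb{Z}^d_k)$, and $C^\ast(\mathbb{Z}^d_k,\sigma)$ the norm closure. $I_k=\prod_j\{\lfloor\frac{1-k_j}{2}\rfloor,\ldots,\lfloor\frac{k_j-1}{2}\rfloor\}$ (factor $\mathbb{Z}$ if $k_j=\infty$); $\{I_k+n:n\in k\mathbb{Z}^d\}$ partitions $\mathbb{Z}^d$. $\pi_{k,\sigma}$ is the representation of $C^\ast(\mathbb{Z}^d_k,\sigma)$ on $\ell^2(\mathbb{Z}^d)$ which, for each $n\in k\mathbb{Z}^d$, leaves $H_n=\overline{\mathrm{span}}\{e_j:j\in I_k+n\}$ invariant and acts there as $W_n\rho_{k,\sigma}(\cdot)W_n^\ast$ with $W_n:\ell^2(\mathbb{Z}^d_k)\to H_n$, $W_ne_{q_k(j)}=e_{j+n}$ ($j\in I_k$). $\upsilon_k:\ell^1(\mathbb{Z}^d)\to\ell^1(\mathbb{Z}^d_k)$ is given by $\upsilon_k(f)(q_k(n))=\sum_{m\in k\mathbb{Z}^d}f(m+n)$. *)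

theory Defs
  imports "HOL-Analysis.Analysis" "HOL-Library.Extended_Nat"
begin

text \<open>Z^d is int ^ 'd (d = CARD('d)); k in (N_*-bar)^d is enat ^ 'd (infinity = the extra point).\<close>

definition in_kZ :: "enat ^ 'd \<Rightarrow> int ^ 'd \<Rightarrow> bool" where
  "in_kZ k n \<longleftrightarrow> (\<forall>j. case k $ j of enat a \<Rightarrow> int a dvd n $ j | \<infinity> \<Rightarrow> n $ j = 0)"

definition I_set :: "enat ^ 'd \<Rightarrow> (int ^ 'd) set" where
  "I_set k = {x. \<forall>j. case k $ j of
      enat a \<Rightarrow> (1 - int a) div 2 \<le> x $ j \<and> x $ j \<le> (int a - 1) div 2
    | \<infinity> \<Rightarrow> True}"

definition red :: "enat ^ 'd \<Rightarrow> int ^ 'd \<Rightarrow> int ^ 'd" where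
  "red k x = (THE r. r \<in> I_set k \<and> in_kZ k (x - r))"

text \<open>Skew-bicharacters of Z^d_k, identified with their lifts to Z^d.\<close>
definition skew_bichar :: "enat ^ 'd \<Rightarrow> (int ^ 'd \<Rightarrow> int ^ 'd \<Rightarrow> complex) \<Rightarrow> bool" where
  "skew_bichar k \<sigma> \<longleftrightarrow>
     (\<forall>m n. norm (\<sigma> m n) = 1) \<and>
     (\<forall>m m' n. \<sigma> (m + m') n = \<sigma> m n * \<sigma> m' n) \<and>
     (\<forall>m n n'. \<sigma> m (n + n') = \<sigma> m n * \<sigma> m n') \<and>
     (\<forall>m n. \<sigma> n m = cnj (\<sigma> m n)) \<and>
     (\<forall>m n p. in_kZ k p \<longrightarrow> \<sigma> (m + p) n = \<sigma> m n)"

definition Xi :: "enat ^ 'd \<Rightarrow> (int ^ 'd \<Rightarrow> int ^ 'd \<Rightarrow> complex) \<Rightarrow> bool" where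
  "Xi k \<sigma> \<longleftrightarrow> (\<forall>j. k $ j \<ge> 2) \<and> skew_bichar k \<sigma>"

text \<open>Convergence in Xi^d: coordinatewise in the one-point compactification of {2,3,...}
  and pointwise convergence of the skew-bicharacters.\<close>
definition Xi_converges ::
  "(nat \<Rightarrow> enat ^ 'd) \<Rightarrow> (nat \<Rightarrow> int ^ 'd \<Rightarrow> int ^ 'd \<Rightarrow> complex)
   \<Rightarrow> enat ^ 'd \<Rightarrow> (int ^ 'd \<Rightarrow> int ^ 'd \<Rightarrow> complex) \<Rightarrow> bool" where
  "Xi_converges ks \<sigma>s k \<sigma> \<longleftrightarrow>
     (\<forall>j. case k $ j of
        enat a \<Rightarrow> (\<forall>\<^sub>F i in sequentially. ks i $ j = enat a)
      | \<infinity> \<Rightarrow> (\<forall>M::nat. \<forall>\<^sub>F i in sequentially. ks i $ j \<ge> enat M)) \<and>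
     (\<forall>m n. (\<lambda>i. \<sigma>s i m n) \<longlonglongrightarrow> \<sigma> m n)"

text \<open>upsilon_k(f), as a (k-periodic) function on Z^d, i.e. lifted along q_k.\<close>
definition upsilon :: "enat ^ 'd \<Rightarrow> (int ^ 'd \<Rightarrow> complex) \<Rightarrow> int ^ 'd \<Rightarrow> complex" where
  "upsilon k f n = (\<Sum>\<^sub>\<infinity>m\<in>{m. in_kZ k m}. f (m + n))"

text \<open>Vectors of l^2(Z^d_k) are represented as functions on Z^d supported on I_k
  (e_{q_k(r)} corresponds to e_r, r in I_k). U^n_{k,sigma} e_m = sigma(m,n) e_{m-n}:\<close>
definition U_op :: "enat ^ 'd \<Rightarrow> (int ^ 'd \<Rightarrow> int ^ 'd \<Rightarrow> complex) \<Rightarrow> int ^ 'd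
    \<Rightarrow> (int ^ 'd \<Rightarrow> complex) \<Rightarrow> int ^ 'd \<Rightarrow> complex" where
  "U_op k \<sigma> n \<eta> r = (if r \<in> I_set k then \<sigma> (red k (r + n)) n * \<eta> (red k (r + n)) else 0)"

text \<open>rho_{k,sigma}(g) = sum over n in Z^d_k of g(n) U^n (g given by its lift to Z^d).\<close>
definition rho_op :: "enat ^ 'd \<Rightarrow> (int ^ 'd \<Rightarrow> int ^ 'd \<Rightarrow> complex) \<Rightarrow> (int ^ 'd \<Rightarrow> complex)
    \<Rightarrow> (int ^ 'd \<Rightarrow> complex) \<Rightarrow> int ^ 'd \<Rightarrow> complex" where
  "rho_op k \<sigma> g \<eta> r = (\<Sum>\<^sub>\<infinity>n\<in>I_set k. g n * U_op k \<sigma> n \<eta> r)"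

text \<open>pi_{k,sigma}(g) on l^2(Z^d): on H_n (n in kZ^d) it acts as W_n rho(g) W_n^*.\<close>
definition pi_op :: "enat ^ 'd \<Rightarrow> (int ^ 'd \<Rightarrow> int ^ 'd \<Rightarrow> complex) \<Rightarrow> (int ^ 'd \<Rightarrow> complex)
    \<Rightarrow> (int ^ 'd \<Rightarrow> complex) \<Rightarrow> int ^ 'd \<Rightarrow> complex" where
  "pi_op k \<sigma> g \<xi> x =
     (let n = x - red k x
      in rho_op k \<sigma> g (\<lambda>r. if r \<in> I_set k then \<xi> (r + n) else 0) (red k x))"

definition is_l2 :: "('a \<Rightarrow> complex) \<Rightarrow> bool" where
  "is_l2 \<xi> \<longleftrightarrow> (\<lambda>x. (norm (\<xi> x))\<^sup>2) summable_on UNIV"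

definition l2_norm :: "('a \<Rightarrow> complex) \<Rightarrow> real" where
  "l2_norm \<xi> = sqrt (\<Sum>\<^sub>\<infinity>x. (norm (\<xi> x))\<^sup>2)"

end

theory Submission
  imports Defs
begin

text \<open>
  Then translate k a x =
  x - red k x + red k (x + a) is a bijection of Z^d preserving every block I_k + n, and unwinding
  the definitions gives pi_{k,sigma}(upsilon_k f) = sum_a f(a) T_a for the unitaries
  T_a = twisted_translate k sigma a, (T_a xi)(x) = sigma(red k (x + a), a) xi(translate k a x).
  If (k_n, sigma_n) -> (k, sigma), then for fixed x and a the reductions of x and x + a modulo k_n
  are eventually those modulo k, so the twisted translates of xi converge pointwise; as they all
  have the norm of xi, Pratt's lemma upgrades this to convergence in l^2. Finally
  ||sum_a f(a) v_a||^2 <= ||f||_1 sum_a |f(a)| ||v_a||^2 and dominated convergence in a (with the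
  bound ||v_a|| <= 2 ||xi||) give the claim.
\<close>

section \<open>Infinite sums and l^2\<close>

lemma summable_on_diff:
  fixes f g :: "'a \<Rightarrow> 'b::topological_ab_group_add"
  assumes "f summable_on A" "g summable_on A"
  shows "(\<lambda>x. f x - g x) summable_on A"
  using summable_on_add[OF assms(1) summable_on_uminus[THEN iffD2, OF assms(2)]] by simp

lemma infsum_diff:
  fixes f g :: "'a \<Rightarrow> 'b::{topological_ab_group_add, t2_space}"
  assumes "f summable_on A" "g summable_on A"
  shows "(\<Sum>\<^sub>\<infinity>x\<in>A. f x - g x) = infsum f A - infsum g A"
  using infsum_add[OF assms(1) summable_on_uminus[THEN iffD2, OF assms(2)]] infsum_uminus[of g A]
  by simp

lemma abs_summable_on_mult_bounded:
  fixes f g :: "'a \<Rightarrow> 'b::real_normed_div_algebra"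
  assumes f: "(\<lambda>a. norm (f a)) summable_on A" and g: "\<And>a. norm (g a) \<le> B"
  shows "(\<lambda>a. norm (f a * g a)) summable_on A"
proof -
  have "(\<lambda>a. B * norm (f a)) summable_on A" using f by (rule summable_on_cmult_right)
  then show ?thesis
  proof (rule summable_on_comparison_test)
    fix a
    show "norm (f a * g a) \<le> B * norm (f a)"
      using mult_left_mono[OF g[of a] norm_ge_zero[of "f a"]] by (simp add: norm_mult mult.commute)
  qed simp
qed

lemma summable_on_mult_bounded:
  fixes f g :: "'a \<Rightarrow> 'b::{real_normed_div_algebra, banach}"
  assumes "(\<lambda>a. norm (f a)) summable_on A" "\<And>a. norm (g a) \<le> B"
  shows "(\<lambda>a. f a * g a) summable_on A"
  using abs_summable_on_mult_bounded[OF assms] by (rule abs_summable_summable)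

lemma Pratt_infsum_tendsto_0:
  fixes h g :: "nat \<Rightarrow> 'a \<Rightarrow> real" and G :: "'a \<Rightarrow> real"
  assumes h_nonneg: "\<And>i x. 0 \<le> h i x" and h_le_g: "\<And>i x. h i x \<le> g i x"
    and h_lim: "\<And>x. (\<lambda>i. h i x) \<longlonglongrightarrow> 0" and g_lim: "\<And>x. (\<lambda>i. g i x) \<longlonglongrightarrow> G x"
    and g_summable: "\<And>i. g i summable_on UNIV" and G_summable: "G summable_on UNIV"
    and infsum_g_lim: "(\<lambda>i. infsum (g i) UNIV) \<longlonglongrightarrow> infsum G UNIV"
  shows "(\<lambda>i. infsum (h i) UNIV) \<longlonglongrightarrow> 0"
proof (rule tendstoI)
  fix e :: real assume e: "e > 0"
  obtain F where F: "finite F" "dist (sum G F) (infsum G UNIV) \<le> e / 4"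
    using infsum_finite_approximation[OF G_summable, of "e / 4"] e by auto
  have h_summable: "h i summable_on UNIV" for i
    using g_summable[of i] by (rule summable_on_comparison_test) (use h_le_g h_nonneg in auto)
  have "(\<lambda>i. infsum (g i) UNIV - sum (g i) F) \<longlonglongrightarrow> infsum G UNIV - sum G F"
    by (intro tendsto_diff infsum_g_lim tendsto_sum g_lim)
  moreover have "infsum G UNIV - sum G F < e / 2" using F(2) e unfolding dist_real_def by linarith
  ultimately have tail: "\<forall>\<^sub>F i in sequentially. infsum (g i) UNIV - sum (g i) F < e / 2"
    by (rule order_tendstoD(2))
  have "(\<lambda>i. sum (h i) F) \<longlonglongrightarrow> (\<Sum>x\<in>F. 0)" by (intro tendsto_sum h_lim)
  then have head: "\<forall>\<^sub>F i in sequentially. sum (h i) F < e / 2"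
    using e by (auto dest: order_tendstoD(2)[where a = "e / 2"])
  show "\<forall>\<^sub>F i in sequentially. dist (infsum (h i) UNIV) 0 < e"
    using tail head
  proof eventually_elim
    case (elim i)
    have "sum (\<lambda>x. g i x - h i x) F \<le> (\<Sum>\<^sub>\<infinity>x. g i x - h i x)"
      by (rule finite_sum_le_infsum)
        (use summable_on_diff[OF g_summable h_summable] F(1) h_le_g in auto)
    also have "\<dots> = infsum (g i) UNIV - infsum (h i) UNIV"
      by (rule infsum_diff[OF g_summable h_summable])
    finally have "infsum (h i) UNIV \<le> (infsum (g i) UNIV - sum (g i) F) + sum (h i) F"
      by (simp add: sum_subtractf)
    moreover have "0 \<le> infsum (h i) UNIV" by (rule infsum_nonneg) (use h_nonneg in auto)
    ultimately show ?case using elim by (simp add: dist_real_def)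
  qed
qed

lemma infsum_weighted_Cauchy_Schwarz:
  fixes p q :: "'a \<Rightarrow> real"
  assumes p_nonneg: "\<And>a. 0 \<le> p a" and p: "p summable_on A"
    and pq: "(\<lambda>a. p a * q a) summable_on A" and pq2: "(\<lambda>a. p a * (q a)\<^sup>2) summable_on A"
  shows "(\<Sum>\<^sub>\<infinity>a\<in>A. p a * q a)\<^sup>2 \<le> infsum p A * (\<Sum>\<^sub>\<infinity>a\<in>A. p a * (q a)\<^sup>2)"
proof -
  define P S Q where "P = infsum p A" and "S = (\<Sum>\<^sub>\<infinity>a\<in>A. p a * q a)"
    and "Q = (\<Sum>\<^sub>\<infinity>a\<in>A. p a * (q a)\<^sup>2)"
  consider "P = 0" | "P > 0" using infsum_nonneg[of A p] p_nonneg unfolding P_def by fastforce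
  then have "S\<^sup>2 \<le> P * Q"
  proof cases
    case 1
    then have "p a = 0" if "a \<in> A" for a
      using nonneg_infsum_le_0D[of p A a] p p_nonneg that unfolding P_def by auto
    then show ?thesis using 1 unfolding S_def by (simp add: infsum_0)
  next
    case 2
    define t where "t = S / P"
    have "(\<lambda>a. 2 * t * (p a * q a)) summable_on A" "(\<lambda>a. t\<^sup>2 * p a) summable_on A"
      using pq p by (auto intro: summable_on_cmult_right)
    note sums = summable_on_diff[OF pq2 this(1)] pq2 this
    have "0 \<le> (\<Sum>\<^sub>\<infinity>a\<in>A. p a * (q a - t)\<^sup>2)" by (rule infsum_nonneg) (use p_nonneg in auto)
    also have "\<dots> = (\<Sum>\<^sub>\<infinity>a\<in>A. (p a * (q a)\<^sup>2 - 2 * t * (p a * q a)) + t\<^sup>2 * p a)"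
      by (rule infsum_cong) (simp add: power2_eq_square algebra_simps)
    also have "\<dots> = (Q - 2 * t * S) + t\<^sup>2 * P"
      unfolding Q_def S_def P_def
      by (simp add: infsum_add infsum_diff sums infsum_cmult_right')
    also have "\<dots> = Q - S\<^sup>2 / P" using 2 unfolding t_def by (simp add: power2_eq_square field_simps)
    finally show ?thesis using 2 by (simp add: field_simps)
  qed
  then show ?thesis unfolding S_def P_def Q_def .
qed

lemma norm_diff_power2_le: "(norm (p - q))\<^sup>2 \<le> 2 * (norm p)\<^sup>2 + 2 * (norm q)\<^sup>2"
proof -
  have "(norm (p - q))\<^sup>2 \<le> (norm p + norm q)\<^sup>2" by (simp add: power_mono norm_triangle_ineq4)
  also have "\<dots> \<le> 2 * (norm p)\<^sup>2 + 2 * (norm q)\<^sup>2"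
    using sum_squares_ge_zero[of "norm p - norm q" 0] by (simp add: power2_eq_square algebra_simps)
  finally show ?thesis .
qed

lemma norm_le_l2_norm: "is_l2 \<xi> \<Longrightarrow> norm (\<xi> y) \<le> l2_norm \<xi>"
  unfolding l2_norm_def is_l2_def
  by (rule real_le_rsqrt, rule finite_sum_le_infsum[of _ UNIV "{y}", simplified]) auto

lemma is_l2_diff:
  assumes u: "is_l2 u" and v: "is_l2 v"
  shows "is_l2 (\<lambda>x. u x - v x)"
    and "(\<Sum>\<^sub>\<infinity>x. (norm (u x - v x))\<^sup>2) \<le> 2 * (\<Sum>\<^sub>\<infinity>x. (norm (u x))\<^sup>2) + 2 * (\<Sum>\<^sub>\<infinity>x. (norm (v x))\<^sup>2)"
proof -
  have g: "(\<lambda>x. 2 * (norm (u x))\<^sup>2 + 2 * (norm (v x))\<^sup>2) summable_on UNIV"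
    using u v unfolding is_l2_def by (intro summable_on_add summable_on_cmult_right)
  then show l2: "is_l2 (\<lambda>x. u x - v x)"
    unfolding is_l2_def by (rule summable_on_comparison_test) (use norm_diff_power2_le in auto)
  have "(\<Sum>\<^sub>\<infinity>x. (norm (u x - v x))\<^sup>2) \<le> (\<Sum>\<^sub>\<infinity>x. 2 * (norm (u x))\<^sup>2 + 2 * (norm (v x))\<^sup>2)"
    using l2 g norm_diff_power2_le unfolding is_l2_def by (intro infsum_mono) auto
  also have "\<dots> = 2 * (\<Sum>\<^sub>\<infinity>x. (norm (u x))\<^sup>2) + 2 * (\<Sum>\<^sub>\<infinity>x. (norm (v x))\<^sup>2)"
    using u v unfolding is_l2_def
    by (simp add: infsum_add summable_on_cmult_right infsum_cmult_right')
  finally show "(\<Sum>\<^sub>\<infinity>x. (norm (u x - v x))\<^sup>2)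
      \<le> 2 * (\<Sum>\<^sub>\<infinity>x. (norm (u x))\<^sup>2) + 2 * (\<Sum>\<^sub>\<infinity>x. (norm (v x))\<^sup>2)" .
qed

lemma l2_tendsto_if_pointwise_and_norms_eq:
  fixes u :: "nat \<Rightarrow> 'a \<Rightarrow> complex"
  assumes u0: "is_l2 u0" and u: "\<And>i. is_l2 (u i)"
    and norms: "\<And>i. (\<Sum>\<^sub>\<infinity>x. (norm (u i x))\<^sup>2) = (\<Sum>\<^sub>\<infinity>x. (norm (u0 x))\<^sup>2)"
    and lim: "\<And>x. (\<lambda>i. u i x) \<longlonglongrightarrow> u0 x"
  shows "(\<lambda>i. \<Sum>\<^sub>\<infinity>x. (norm (u i x - u0 x))\<^sup>2) \<longlonglongrightarrow> 0"
proof (rule Pratt_infsum_tendsto_0)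
  show "(\<lambda>i. (norm (u i x - u0 x))\<^sup>2) \<longlonglongrightarrow> 0" for x
    using tendsto_power[OF tendsto_norm[OF tendsto_diff[OF lim tendsto_const]], of x "u0 x" 2] by simp
  show "(\<lambda>i. 2 * (norm (u i x))\<^sup>2 + 2 * (norm (u0 x))\<^sup>2) \<longlonglongrightarrow> 4 * (norm (u0 x))\<^sup>2" for x
    using tendsto_add[OF tendsto_mult[OF tendsto_const tendsto_power[OF tendsto_norm[OF lim]]] tendsto_const,
        of 2 x 2 "2 * (norm (u0 x))\<^sup>2"] by simp
  show "(\<lambda>x. 2 * (norm (u i x))\<^sup>2 + 2 * (norm (u0 x))\<^sup>2) summable_on UNIV" for i
    using u u0 unfolding is_l2_def by (intro summable_on_add summable_on_cmult_right)
  show "(\<lambda>x. 4 * (norm (u0 x))\<^sup>2) summable_on UNIV"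
    using u0 unfolding is_l2_def by (rule summable_on_cmult_right)
  show "(\<lambda>i. \<Sum>\<^sub>\<infinity>x. 2 * (norm (u i x))\<^sup>2 + 2 * (norm (u0 x))\<^sup>2) \<longlonglongrightarrow> (\<Sum>\<^sub>\<infinity>x. 4 * (norm (u0 x))\<^sup>2)"
    using u u0 norms unfolding is_l2_def
    by (simp add: infsum_add summable_on_cmult_right infsum_cmult_right')
qed (simp_all add: norm_diff_power2_le)

lemma norm_infsum_mult_power2_le:
  fixes f v :: "'a \<Rightarrow> complex"
  assumes f: "(\<lambda>a. norm (f a)) summable_on UNIV" and v: "\<And>a. norm (v a) \<le> C"
  shows "(norm (\<Sum>\<^sub>\<infinity>a. f a * v a))\<^sup>2 \<le> (\<Sum>\<^sub>\<infinity>a. norm (f a)) * (\<Sum>\<^sub>\<infinity>a. norm (f a) * (norm (v a))\<^sup>2)"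
proof -
  have fv: "(\<lambda>a. norm (f a) * norm (v a)) summable_on UNIV"
    using abs_summable_on_mult_bounded[OF f v] by (simp add: norm_mult)
  have "norm (norm (v a) ^ 2) \<le> C\<^sup>2" for a by (simp add: power_mono v)
  then have fv2: "(\<lambda>a. norm (f a) * (norm (v a))\<^sup>2) summable_on UNIV"
    by (intro summable_on_mult_bounded[of "\<lambda>a. norm (f a)"]) (use f in simp_all)
  have "norm (\<Sum>\<^sub>\<infinity>a. f a * v a) \<le> (\<Sum>\<^sub>\<infinity>a. norm (f a) * norm (v a))"
    using norm_infsum_bound[of "\<lambda>a. f a * v a" UNIV] fv by (simp add: norm_mult)
  then have "(norm (\<Sum>\<^sub>\<infinity>a. f a * v a))\<^sup>2 \<le> (\<Sum>\<^sub>\<infinity>a. norm (f a) * norm (v a))\<^sup>2"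
    by (simp add: power_mono)
  also have "\<dots> \<le> (\<Sum>\<^sub>\<infinity>a. norm (f a)) * (\<Sum>\<^sub>\<infinity>a. norm (f a) * (norm (v a))\<^sup>2)"
    by (rule infsum_weighted_Cauchy_Schwarz[OF _ f fv fv2]) simp
  finally show ?thesis .
qed

lemma weighted_l2_infsum_swap:
  fixes w :: "'a \<Rightarrow> real" and v :: "'a \<Rightarrow> 'b \<Rightarrow> complex"
  assumes w_nonneg: "\<And>a. 0 \<le> w a" and w: "w summable_on UNIV"
    and v: "\<And>a. is_l2 (v a)" and M: "\<And>a. (\<Sum>\<^sub>\<infinity>x. (norm (v a x))\<^sup>2) \<le> M"
  shows "(\<lambda>x. \<Sum>\<^sub>\<infinity>a. w a * (norm (v a x))\<^sup>2) summable_on UNIV"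
    and "(\<Sum>\<^sub>\<infinity>x. \<Sum>\<^sub>\<infinity>a. w a * (norm (v a x))\<^sup>2) = (\<Sum>\<^sub>\<infinity>a. w a * (\<Sum>\<^sub>\<infinity>x. (norm (v a x))\<^sup>2))"
proof -
  define E where "E a = (\<Sum>\<^sub>\<infinity>x. (norm (v a x))\<^sup>2)" for a
  have row: "((\<lambda>x. w a * (norm (v a x))\<^sup>2) has_sum (w a * E a)) UNIV" for a
    unfolding E_def by (rule has_sum_cmult_right) (use v in \<open>simp add: is_l2_def\<close>)
  have "(\<lambda>a. M * w a) summable_on UNIV" using w by (rule summable_on_cmult_right)
  then have wE: "(\<lambda>a. w a * E a) summable_on UNIV"
    by (rule summable_on_comparison_test)
      (use mult_left_mono[OF M w_nonneg] w_nonneg in \<open>auto simp: E_def mult.commute infsum_nonneg\<close>)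
  have "(\<lambda>(a, x). w a * (norm (v a x))\<^sup>2) summable_on UNIV \<times> UNIV"
    by (rule summable_on_SigmaI[OF _ wE]) (use row w_nonneg in auto)
  then have swapped: "(\<lambda>(x, a). w a * (norm (v a x))\<^sup>2) summable_on UNIV \<times> UNIV"
    by (subst summable_on_swap) (simp add: case_prod_unfold)
  have "(\<lambda>a. w a * (norm (v a x))\<^sup>2) summable_on UNIV" for x
    using summable_on_SigmaD1[OF swapped] by simp
  then show "(\<lambda>x. \<Sum>\<^sub>\<infinity>a. w a * (norm (v a x))\<^sup>2) summable_on UNIV"
    using summable_on_SigmaD[OF swapped] by (simp add: case_prod_unfold)
  have "(\<Sum>\<^sub>\<infinity>x. \<Sum>\<^sub>\<infinity>a. w a * (norm (v a x))\<^sup>2) = (\<Sum>\<^sub>\<infinity>a. \<Sum>\<^sub>\<infinity>x. w a * (norm (v a x))\<^sup>2)"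
    by (rule infsum_swap_banach) (use swapped in simp)
  also have "\<dots> = (\<Sum>\<^sub>\<infinity>a. w a * E a)" using row infsumI by metis
  finally show "(\<Sum>\<^sub>\<infinity>x. \<Sum>\<^sub>\<infinity>a. w a * (norm (v a x))\<^sup>2) = (\<Sum>\<^sub>\<infinity>a. w a * (\<Sum>\<^sub>\<infinity>x. (norm (v a x))\<^sup>2))"
    unfolding E_def .
qed

lemma l2_infsum_mult_le:
  fixes f :: "'a \<Rightarrow> complex" and v :: "'a \<Rightarrow> 'b \<Rightarrow> complex"
  assumes f: "(\<lambda>a. norm (f a)) summable_on UNIV" and C: "\<And>a x. norm (v a x) \<le> C"
    and v: "\<And>a. is_l2 (v a)" and M: "\<And>a. (\<Sum>\<^sub>\<infinity>x. (norm (v a x))\<^sup>2) \<le> M"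
  shows "(\<Sum>\<^sub>\<infinity>x. (norm (\<Sum>\<^sub>\<infinity>a. f a * v a x))\<^sup>2)
    \<le> (\<Sum>\<^sub>\<infinity>a. norm (f a)) * (\<Sum>\<^sub>\<infinity>a. norm (f a) * (\<Sum>\<^sub>\<infinity>x. (norm (v a x))\<^sup>2))"
proof -
  define Q where "Q x = (\<Sum>\<^sub>\<infinity>a. norm (f a) * (norm (v a x))\<^sup>2)" for x
  note swap = weighted_l2_infsum_swap[of "\<lambda>a. norm (f a)", OF norm_ge_zero f v M]
  have bound: "(norm (\<Sum>\<^sub>\<infinity>a. f a * v a x))\<^sup>2 \<le> (\<Sum>\<^sub>\<infinity>a. norm (f a)) * Q x" for x
    unfolding Q_def by (rule norm_infsum_mult_power2_le[OF f C])
  have FQ: "(\<lambda>x. (\<Sum>\<^sub>\<infinity>a. norm (f a)) * Q x) summable_on UNIV"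
    unfolding Q_def by (rule summable_on_cmult_right[OF swap(1)])
  have "(\<Sum>\<^sub>\<infinity>x. (norm (\<Sum>\<^sub>\<infinity>a. f a * v a x))\<^sup>2) \<le> (\<Sum>\<^sub>\<infinity>x. (\<Sum>\<^sub>\<infinity>a. norm (f a)) * Q x)"
    by (rule infsum_mono[OF _ FQ bound])
      (rule summable_on_comparison_test[OF FQ bound], simp)
  also have "\<dots> = (\<Sum>\<^sub>\<infinity>a. norm (f a)) * (\<Sum>\<^sub>\<infinity>a. norm (f a) * (\<Sum>\<^sub>\<infinity>x. (norm (v a x))\<^sup>2))"
    unfolding Q_def by (simp add: infsum_cmult_right' swap(2))
  finally show ?thesis .
qed

lemma l2_infsum_mult_tendsto_0:
  fixes f :: "'a \<Rightarrow> complex" and v :: "nat \<Rightarrow> 'a \<Rightarrow> 'b \<Rightarrow> complex"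
  assumes f: "(\<lambda>a. norm (f a)) summable_on UNIV" and C: "\<And>i a x. norm (v i a x) \<le> C"
    and v: "\<And>i a. is_l2 (v i a)" and M: "\<And>i a. (\<Sum>\<^sub>\<infinity>x. (norm (v i a x))\<^sup>2) \<le> M"
    and lim: "\<And>a. (\<lambda>i. \<Sum>\<^sub>\<infinity>x. (norm (v i a x))\<^sup>2) \<longlonglongrightarrow> 0"
  shows "(\<lambda>i. \<Sum>\<^sub>\<infinity>x. (norm (\<Sum>\<^sub>\<infinity>a. f a * v i a x))\<^sup>2) \<longlonglongrightarrow> 0"
proof -
  define E where "E i a = (\<Sum>\<^sub>\<infinity>x. (norm (v i a x))\<^sup>2)" for i a
  have Mf: "(\<lambda>a. M * norm (f a)) summable_on UNIV" using f by (rule summable_on_cmult_right)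
  have "(\<lambda>i. \<Sum>\<^sub>\<infinity>a. norm (f a) * E i a) \<longlonglongrightarrow> 0"
  proof (rule Pratt_infsum_tendsto_0[where g = "\<lambda>i a. M * norm (f a)" and G = "\<lambda>a. M * norm (f a)"])
    show "0 \<le> norm (f a) * E i a" for i a unfolding E_def by (simp add: infsum_nonneg)
    show "norm (f a) * E i a \<le> M * norm (f a)" for i a
      using mult_left_mono[OF M norm_ge_zero] unfolding E_def by (simp add: mult.commute)
    show "(\<lambda>i. norm (f a) * E i a) \<longlonglongrightarrow> 0" for a
      using tendsto_mult_right_zero[OF lim] unfolding E_def .
  qed (simp_all add: Mf)
  then have "(\<lambda>i. (\<Sum>\<^sub>\<infinity>a. norm (f a)) * (\<Sum>\<^sub>\<infinity>a. norm (f a) * E i a)) \<longlonglongrightarrow> 0"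
    by (rule tendsto_mult_right_zero)
  then show ?thesis
    by (rule tendsto_sandwich[rotated 2, OF tendsto_const])
      (use l2_infsum_mult_le[OF f C v M] in \<open>auto simp: E_def infsum_nonneg\<close>)
qed

section \<open>Reduction modulo k\<close>

definition I_lo :: "nat \<Rightarrow> int" where "I_lo a = (1 - int a) div 2"
definition I_hi :: "nat \<Rightarrow> int" where "I_hi a = (int a - 1) div 2"

definition red_coord :: "enat \<Rightarrow> int \<Rightarrow> int" where
  "red_coord e z = (case e of enat a \<Rightarrow> I_lo a + (z - I_lo a) mod int a | \<infinity> \<Rightarrow> z)"

lemma red_coord_bounds:
  assumes "a > 0"
  shows "I_lo a \<le> red_coord (enat a) z" "red_coord (enat a) z \<le> I_hi a"
proof -
  have "0 \<le> (z - I_lo a) mod int a" "(z - I_lo a) mod int a < int a" using assms by auto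
  moreover have "I_hi a - I_lo a = int a - 1" unfolding I_hi_def I_lo_def by presburger
  ultimately show "I_lo a \<le> red_coord (enat a) z" "red_coord (enat a) z \<le> I_hi a"
    unfolding red_coord_def by auto
qed

lemma red_coord_dvd: "int a dvd z - red_coord (enat a) z"
proof -
  have "z - red_coord (enat a) z = (z - I_lo a) - (z - I_lo a) mod int a"
    unfolding red_coord_def by simp
  also have "\<dots> = int a * ((z - I_lo a) div int a)" by (simp add: minus_mod_eq_mult_div)
  finally show ?thesis by simp
qed

lemma interval_eq_if_dvd_diff:
  fixes r r' :: int
  assumes "I_lo a \<le> r" "r \<le> I_hi a" "I_lo a \<le> r'" "r' \<le> I_hi a" "int a dvd r - r'"
  shows "r = r'"
proof -
  obtain t where t: "r - r' = int a * t" using assms(5) by (auto simp: dvd_def)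
  have "\<bar>int a * t\<bar> < int a"
    using assms(1-4) t unfolding I_hi_def I_lo_def by linarith
  then have "\<bar>t\<bar> < 1" by (simp add: abs_mult mult_less_cancel_left2)
  then have "t = 0" by simp
  with t show ?thesis by simp
qed

lemma red_coord_eq_self_if_large:
  assumes "2 * \<bar>z\<bar> + 2 \<le> int b"
  shows "red_coord (enat b) z = z"
proof (rule interval_eq_if_dvd_diff)
  have "(1 - int b) div 2 \<le> (2 * z) div 2" "(2 * z) div 2 \<le> (int b - 1) div 2"
    using assms by (intro zdiv_mono1; linarith)+
  then show "I_lo b \<le> z" "z \<le> I_hi b" unfolding I_lo_def I_hi_def by simp_all
  show "I_lo b \<le> red_coord (enat b) z" "red_coord (enat b) z \<le> I_hi b"
    using assms by (intro red_coord_bounds; linarith)+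
  show "int b dvd red_coord (enat b) z - z"
    using red_coord_dvd[of b z] by (metis dvd_minus_iff minus_diff_eq)
qed

lemma red_coord_eventually_eq:
  fixes e :: "nat \<Rightarrow> enat"
  assumes "case e0 of enat a \<Rightarrow> (\<forall>\<^sub>F i in sequentially. e i = enat a)
      | \<infinity> \<Rightarrow> (\<forall>M::nat. \<forall>\<^sub>F i in sequentially. e i \<ge> enat M)"
  shows "\<forall>\<^sub>F i in sequentially. red_coord (e i) z = red_coord e0 z"
proof (cases e0)
  case (enat a)
  with assms show ?thesis by (auto elim: eventually_mono)
next
  case infinity
  with assms have "\<forall>\<^sub>F i in sequentially. e i \<ge> enat (nat (2 * \<bar>z\<bar> + 2))" by simp
  then show ?thesis
  proof (rule eventually_mono)
    fix i assume "e i \<ge> enat (nat (2 * \<bar>z\<bar> + 2))"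
    then show "red_coord (e i) z = red_coord e0 z"
      using red_coord_eq_self_if_large[of z] infinity
      by (cases "e i") (auto simp: red_coord_def)
  qed
qed

definition pos_periods :: "enat ^ 'd \<Rightarrow> bool" where
  "pos_periods k \<longleftrightarrow> (\<forall>j. 0 < k $ j)"

lemma Xi_pos_periods: "Xi k \<sigma> \<Longrightarrow> pos_periods k"
proof -
  assume "Xi k \<sigma>"
  then have "2 \<le> k $ j" for j unfolding Xi_def by blast
  then show ?thesis unfolding pos_periods_def by (metis order.strict_trans2 zero_less_numeral)
qed

lemma in_kZ_0: "in_kZ k 0"
  unfolding in_kZ_def by (auto split: enat.splits)

lemma in_kZ_uminus:
  assumes "in_kZ k x"
  shows "in_kZ k (- x)"
  unfolding in_kZ_def
proof
  fix j
  show "case k $ j of enat a \<Rightarrow> int a dvd (- x) $ j | \<infinity> \<Rightarrow> (- x) $ j = 0"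
    using assms[unfolded in_kZ_def, THEN spec[of _ j]] by (cases "k $ j") auto
qed

lemma in_kZ_add:
  assumes "in_kZ k x" "in_kZ k y"
  shows "in_kZ k (x + y)"
  unfolding in_kZ_def
proof
  fix j
  show "case k $ j of enat a \<Rightarrow> int a dvd (x + y) $ j | \<infinity> \<Rightarrow> (x + y) $ j = 0"
    using assms[unfolded in_kZ_def, THEN spec[of _ j]] by (cases "k $ j") auto
qed

lemma in_kZ_diff: "in_kZ k x \<Longrightarrow> in_kZ k y \<Longrightarrow> in_kZ k (x - y)"
  using in_kZ_add[of k x "- y"] in_kZ_uminus[of k y] by simp

lemma I_set_eq_if_in_kZ_diff:
  assumes "r \<in> I_set k" "r' \<in> I_set k" "in_kZ k (r - r')"
  shows "r = r'"
proof (subst vec_eq_iff, rule allI)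
  fix j
  show "r $ j = r' $ j"
    using assms interval_eq_if_dvd_diff[of _ "r $ j" "r' $ j"]
    unfolding I_set_def in_kZ_def I_lo_def I_hi_def by (auto split: enat.splits dest!: spec[of _ j])
qed

lemma red_coord_vec_in_I_set:
  assumes "pos_periods k"
  shows "(\<chi> j. red_coord (k $ j) (x $ j)) \<in> I_set k"
  unfolding I_set_def
proof (intro CollectI allI)
  fix j
  show "case k $ j of enat a \<Rightarrow> (1 - int a) div 2 \<le> (\<chi> j. red_coord (k $ j) (x $ j)) $ j
      \<and> (\<chi> j. red_coord (k $ j) (x $ j)) $ j \<le> (int a - 1) div 2 | \<infinity> \<Rightarrow> True"
  proof (cases "k $ j")
    case (enat a)
    then have "a > 0" using assms unfolding pos_periods_def by (metis enat_0_iff(1) not_gr_zero)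
    then show ?thesis using enat red_coord_bounds[of a "x $ j"] unfolding I_lo_def I_hi_def by simp
  qed simp
qed

lemma in_kZ_diff_red_coord_vec: "in_kZ k (x - (\<chi> j. red_coord (k $ j) (x $ j)))"
  using red_coord_dvd unfolding in_kZ_def by (auto simp: red_coord_def split: enat.splits)

lemma ex1_red:
  assumes "pos_periods k"
  shows "\<exists>!r. r \<in> I_set k \<and> in_kZ k (x - r)"
proof (rule ex_ex1I)
  show "\<exists>r. r \<in> I_set k \<and> in_kZ k (x - r)"
    using red_coord_vec_in_I_set[OF assms] in_kZ_diff_red_coord_vec by blast
next
  fix r r' assume "r \<in> I_set k \<and> in_kZ k (x - r)" "r' \<in> I_set k \<and> in_kZ k (x - r')"
  moreover have "(x - r) - (x - r') = r' - r" by simp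
  ultimately show "r' = r"
    using I_set_eq_if_in_kZ_diff[of r' k r] in_kZ_diff[of k "x - r" "x - r'"] by auto
qed

lemma red_eqI: "pos_periods k \<Longrightarrow> r \<in> I_set k \<Longrightarrow> in_kZ k (x - r) \<Longrightarrow> red k x = r"
  unfolding red_def by (rule the1_equality[OF ex1_red]) auto

lemma red_in_I_set: "pos_periods k \<Longrightarrow> red k x \<in> I_set k"
  unfolding red_def using theI'[OF ex1_red] by blast

lemma in_kZ_diff_red: "pos_periods k \<Longrightarrow> in_kZ k (x - red k x)"
  unfolding red_def using theI'[OF ex1_red] by blast

lemma red_eq_red_coord: "pos_periods k \<Longrightarrow> red k x = (\<chi> j. red_coord (k $ j) (x $ j))"
  using red_eqI red_coord_vec_in_I_set in_kZ_diff_red_coord_vec by blast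

lemma red_cong:
  assumes "pos_periods k" "in_kZ k (x - y)"
  shows "red k x = red k y"
proof (rule red_eqI[OF assms(1) red_in_I_set[OF assms(1)]])
  show "in_kZ k (x - red k y)"
    using in_kZ_add[OF assms(2) in_kZ_diff_red[OF assms(1), of y]] by simp
qed

lemma red_idem:
  assumes "pos_periods k"
  shows "red k (red k x) = red k x"
  by (rule red_eqI[OF assms red_in_I_set[OF assms]]) (simp add: in_kZ_0)

lemma red_eventually_eq:
  assumes "Xi_converges ks \<sigma>s k \<sigma>" "\<And>i. pos_periods (ks i)" "pos_periods k"
  shows "\<forall>\<^sub>F i in sequentially. red (ks i) y = red k y"
proof -
  have "\<forall>\<^sub>F i in sequentially. \<forall>j. red_coord (ks i $ j) (y $ j) = red_coord (k $ j) (y $ j)"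
    using assms(1) unfolding Xi_converges_def by (intro eventually_all_finite red_coord_eventually_eq) blast
  then show ?thesis by (rule eventually_mono) (simp add: red_eq_red_coord assms(2,3) vec_eq_iff)
qed

lemma skew_bichar_norm: "skew_bichar k \<sigma> \<Longrightarrow> norm (\<sigma> m n) = 1"
  unfolding skew_bichar_def by blast

lemma skew_bichar_periodic_right:
  assumes "skew_bichar k \<sigma>" "in_kZ k p"
  shows "\<sigma> m (n + p) = \<sigma> m n"
proof -
  have "\<sigma> m (n + p) = cnj (\<sigma> (n + p) m)" "\<sigma> m n = cnj (\<sigma> n m)"
    using assms(1) unfolding skew_bichar_def by (metis complex_cnj_cnj)+
  moreover have "\<sigma> (n + p) m = \<sigma> n m" using assms unfolding skew_bichar_def by blast
  ultimately show ?thesis by simp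
qed

section \<open>Twisted translations\<close>

definition translate :: "enat ^ 'd \<Rightarrow> int ^ 'd \<Rightarrow> int ^ 'd \<Rightarrow> int ^ 'd" where
  "translate k a x = x - red k x + red k (x + a)"

lemma translate_uminus_translate:
  assumes "pos_periods k"
  shows "translate k (- a) (translate k a x) = x"
proof -
  have "translate k a x - red k (x + a) = x - red k x" by (simp add: translate_def)
  then have "red k (translate k a x) = red k (red k (x + a))"
    using red_cong[OF assms, of "translate k a x" "red k (x + a)"] in_kZ_diff_red[OF assms] by simp
  then have red_y: "red k (translate k a x) = red k (x + a)" by (simp only: red_idem[OF assms])
  have "(translate k a x + - a) - x = (x - red k x) - (x + a - red k (x + a))"
    by (simp add: translate_def)
  then have "in_kZ k ((translate k a x + - a) - x)"
    using in_kZ_diff[OF in_kZ_diff_red in_kZ_diff_red] assms by metis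
  then have red_z: "red k (translate k a x + - a) = red k x" by (rule red_cong[OF assms])
  show ?thesis unfolding translate_def[of k "- a"] red_y red_z by (simp add: translate_def)
qed

lemma bij_translate: "pos_periods k \<Longrightarrow> bij (translate k a)"
  by (rule o_bij[of "translate k (- a)"]) (use translate_uminus_translate[of k "- a"] in
      \<open>auto simp: fun_eq_iff translate_uminus_translate\<close>)

text \<open>This is pi_{k,sigma}(U^a_{k,sigma}).\<close>
definition twisted_translate :: "enat ^ 'd \<Rightarrow> (int ^ 'd \<Rightarrow> int ^ 'd \<Rightarrow> complex) \<Rightarrow> int ^ 'd
    \<Rightarrow> (int ^ 'd \<Rightarrow> complex) \<Rightarrow> int ^ 'd \<Rightarrow> complex" where
  "twisted_translate k \<sigma> a \<xi> x = \<sigma> (red k (x + a)) a * \<xi> (translate k a x)"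

lemma norm_twisted_translate:
  "skew_bichar k \<sigma> \<Longrightarrow> norm (twisted_translate k \<sigma> a \<xi> x) = norm (\<xi> (translate k a x))"
  by (simp add: twisted_translate_def norm_mult skew_bichar_norm)

lemma twisted_translate_periodic:
  assumes "skew_bichar k \<sigma>" "pos_periods k" "in_kZ k m"
  shows "twisted_translate k \<sigma> (m + a) \<xi> x = twisted_translate k \<sigma> a \<xi> x"
proof -
  have "red k (x + (m + a)) = red k (x + a)"
    using red_cong[OF assms(2)] assms(3) by (simp add: algebra_simps)
  moreover have "\<sigma> r (m + a) = \<sigma> r a" for r
    using skew_bichar_periodic_right[OF assms(1,3), of r a] by (simp add: add.commute)
  ultimately show ?thesis unfolding twisted_translate_def translate_def by simp
qed

lemma twisted_translate_tendsto:
  assumes "Xi_converges ks \<sigma>s k \<sigma>" "\<And>i. pos_periods (ks i)" "pos_periods k"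
  shows "(\<lambda>i. twisted_translate (ks i) (\<sigma>s i) a \<xi> x) \<longlonglongrightarrow> twisted_translate k \<sigma> a \<xi> x"
proof -
  have "\<forall>\<^sub>F i in sequentially.
      \<sigma>s i (red k (x + a)) a * \<xi> (translate k a x) = twisted_translate (ks i) (\<sigma>s i) a \<xi> x"
    using red_eventually_eq[OF assms, of x] red_eventually_eq[OF assms, of "x + a"]
    by eventually_elim (simp add: twisted_translate_def translate_def)
  moreover have "(\<lambda>i. \<sigma>s i (red k (x + a)) a * \<xi> (translate k a x)) \<longlonglongrightarrow> twisted_translate k \<sigma> a \<xi> x"
    using assms(1) unfolding Xi_converges_def twisted_translate_def by (intro tendsto_mult tendsto_const) blast
  ultimately show ?thesis by (rule Lim_transform_eventually[rotated])
qed

lemma pi_op_eq_infsum_twisted_translate: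
  assumes "pos_periods k"
  shows "pi_op k \<sigma> g \<xi> x = (\<Sum>\<^sub>\<infinity>n\<in>I_set k. g n * twisted_translate k \<sigma> n \<xi> x)"
proof -
  define r where "r = red k x"
  have "U_op k \<sigma> n (\<lambda>s. if s \<in> I_set k then \<xi> (s + (x - r)) else 0) r = twisted_translate k \<sigma> n \<xi> x"
    for n
  proof -
    have "red k (r + n) = red k (x + n)"
      using red_cong[OF assms] in_kZ_uminus[OF in_kZ_diff_red[OF assms, of x]]
      unfolding r_def by (simp add: algebra_simps)
    then show ?thesis
      using red_in_I_set[OF assms] unfolding U_op_def twisted_translate_def translate_def r_def
      by (simp add: algebra_simps)
  qed
  then show ?thesis unfolding pi_op_def rho_op_def Let_def r_def by simp
qed

lemma bij_betw_I_set_times_kZ: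
  fixes k :: "enat ^ 'd"
  assumes "pos_periods k"
  shows "bij_betw (\<lambda>(n, m). m + n) (I_set k \<times> {m. in_kZ k m}) UNIV"
proof (rule bij_betwI')
  fix p q assume "p \<in> I_set k \<times> {m. in_kZ k m}" "q \<in> I_set k \<times> {m. in_kZ k m}"
  moreover obtain n m n' m' where "p = (n, m)" "q = (n', m')" by force
  ultimately have "n = red k (m + n)" "n' = red k (m' + n')"
    using red_eqI[OF assms] by auto
  then show "((case p of (n, m) \<Rightarrow> m + n) = (case q of (n, m) \<Rightarrow> m + n)) = (p = q)"
    using \<open>p = (n, m)\<close> \<open>q = (n', m')\<close> by auto
next
  fix x :: "int ^ 'd"
  show "\<exists>p\<in>I_set k \<times> {m. in_kZ k m}. x = (case p of (n, m) \<Rightarrow> m + n)"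
    using red_in_I_set[OF assms] in_kZ_diff_red[OF assms]
    by (intro bexI[of _ "(red k x, x - red k x)"]) auto
qed simp

lemma infsum_upsilon_mult_periodic:
  fixes f h :: "int ^ 'd \<Rightarrow> complex"
  assumes k: "pos_periods k" and f: "(\<lambda>x. norm (f x)) summable_on UNIV"
    and h_bounded: "\<And>a. norm (h a) \<le> B" and h_periodic: "\<And>m a. in_kZ k m \<Longrightarrow> h (m + a) = h a"
  shows "(\<Sum>\<^sub>\<infinity>n\<in>I_set k. upsilon k f n * h n) = (\<Sum>\<^sub>\<infinity>a. f a * h a)"
proof -
  let ?kZ = "{m. in_kZ k m}"
  note bij = bij_betw_I_set_times_kZ[OF k]
  have "(\<lambda>(n, m). f (m + n) * h (m + n)) summable_on I_set k \<times> ?kZ"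
    using summable_on_reindex_bij_betw[OF bij, of "\<lambda>a. f a * h a"]
      summable_on_mult_bounded[OF f h_bounded]
    by (simp add: case_prod_unfold)
  note Fubini = infsum_Sigma_banach[OF this]
  have "(\<Sum>\<^sub>\<infinity>n\<in>I_set k. upsilon k f n * h n) = (\<Sum>\<^sub>\<infinity>n\<in>I_set k. \<Sum>\<^sub>\<infinity>m\<in>?kZ. f (m + n) * h (m + n))"
  proof (rule infsum_cong)
    fix n
    have "upsilon k f n * h n = (\<Sum>\<^sub>\<infinity>m\<in>?kZ. f (m + n) * h n)"
      unfolding upsilon_def by (rule infsum_cmult_left'[symmetric])
    also have "\<dots> = (\<Sum>\<^sub>\<infinity>m\<in>?kZ. f (m + n) * h (m + n))"
      by (rule infsum_cong) (simp add: h_periodic)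
    finally show "upsilon k f n * h n = (\<Sum>\<^sub>\<infinity>m\<in>?kZ. f (m + n) * h (m + n))" .
  qed
  also have "\<dots> = (\<Sum>\<^sub>\<infinity>a. f a * h a)"
    using Fubini infsum_reindex_bij_betw[OF bij, of "\<lambda>a. f a * h a"] by (simp add: case_prod_unfold)
  finally show ?thesis .
qed

lemma pi_op_upsilon_eq_infsum:
  assumes "Xi k \<sigma>" "(\<lambda>x. norm (f x)) summable_on UNIV" "\<And>y. norm (\<xi> y) \<le> B"
  shows "pi_op k \<sigma> (upsilon k f) \<xi> x = (\<Sum>\<^sub>\<infinity>a. f a * twisted_translate k \<sigma> a \<xi> x)"
proof -
  have k: "pos_periods k" and \<sigma>: "skew_bichar k \<sigma>"
    using assms(1) Xi_pos_periods unfolding Xi_def by blast+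
  show ?thesis
    unfolding pi_op_eq_infsum_twisted_translate[OF k]
    by (rule infsum_upsilon_mult_periodic[OF k assms(2), where B = B])
      (simp_all add: norm_twisted_translate[OF \<sigma>] assms(3) twisted_translate_periodic[OF \<sigma> k])
qed

lemma twisted_translate_l2:
  assumes "Xi k \<sigma>" "is_l2 \<xi>"
  shows "is_l2 (twisted_translate k \<sigma> a \<xi>)"
    and "(\<Sum>\<^sub>\<infinity>x. (norm (twisted_translate k \<sigma> a \<xi> x))\<^sup>2) = (\<Sum>\<^sub>\<infinity>x. (norm (\<xi> x))\<^sup>2)"
proof -
  have k: "pos_periods k" and \<sigma>: "skew_bichar k \<sigma>"
    using assms(1) Xi_pos_periods unfolding Xi_def by blast+
  note bij = bij_translate[OF k, of a] and norms = norm_twisted_translate[OF \<sigma>]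
  show "is_l2 (twisted_translate k \<sigma> a \<xi>)"
    using summable_on_reindex_bij_betw[OF bij, of "\<lambda>y. (norm (\<xi> y))\<^sup>2"] assms(2)
    unfolding is_l2_def norms by (simp add: comp_def)
  show "(\<Sum>\<^sub>\<infinity>x. (norm (twisted_translate k \<sigma> a \<xi> x))\<^sup>2) = (\<Sum>\<^sub>\<infinity>x. (norm (\<xi> x))\<^sup>2)"
    using infsum_reindex_bij_betw[OF bij, of "\<lambda>y. (norm (\<xi> y))\<^sup>2"] unfolding norms by (simp add: comp_def)
qed

lemma pi_op_upsilon_diff_eq_infsum:
  assumes "Xi k \<sigma>" "Xi k' \<sigma>'" and f: "(\<lambda>x. norm (f x)) summable_on UNIV" and "is_l2 \<xi>"
  shows "pi_op k' \<sigma>' (upsilon k' f) \<xi> x - pi_op k \<sigma> (upsilon k f) \<xi> x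
    = (\<Sum>\<^sub>\<infinity>a. f a * (twisted_translate k' \<sigma>' a \<xi> x - twisted_translate k \<sigma> a \<xi> x))"
proof -
  have \<sigma>: "skew_bichar k \<sigma>" "skew_bichar k' \<sigma>'" using assms(1,2) unfolding Xi_def by blast+
  note \<xi>_bounded = norm_le_l2_norm[OF assms(4)]
  have "(\<lambda>a. f a * twisted_translate k \<sigma> a \<xi> x) summable_on UNIV"
    "(\<lambda>a. f a * twisted_translate k' \<sigma>' a \<xi> x) summable_on UNIV"
    by (rule summable_on_mult_bounded[OF f, where B = "l2_norm \<xi>"],
        simp add: norm_twisted_translate \<sigma> \<xi>_bounded)+
  then show ?thesis
    by (simp add: pi_op_upsilon_eq_infsum[OF assms(1) f \<xi>_bounded]
        pi_op_upsilon_eq_infsum[OF assms(2) f \<xi>_bounded] infsum_diff[symmetric] algebra_simps)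
qed
lemma twisted_translate_diff_l2:
  assumes "Xi k \<sigma>" "Xi k' \<sigma>'" "is_l2 \<xi>"
  shows "is_l2 (\<lambda>x. twisted_translate k' \<sigma>' a \<xi> x - twisted_translate k \<sigma> a \<xi> x)"
    and "(\<Sum>\<^sub>\<infinity>x. (norm (twisted_translate k' \<sigma>' a \<xi> x - twisted_translate k \<sigma> a \<xi> x))\<^sup>2)
      \<le> 4 * (\<Sum>\<^sub>\<infinity>x. (norm (\<xi> x))\<^sup>2)"
    and "norm (twisted_translate k' \<sigma>' a \<xi> x - twisted_translate k \<sigma> a \<xi> x) \<le> 2 * l2_norm \<xi>"
proof -
  have \<sigma>: "skew_bichar k \<sigma>" "skew_bichar k' \<sigma>'" using assms(1,2) unfolding Xi_def by blast+
  note tt = twisted_translate_l2[OF assms(1,3), of a] twisted_translate_l2[OF assms(2,3), of a]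
  show "is_l2 (\<lambda>x. twisted_translate k' \<sigma>' a \<xi> x - twisted_translate k \<sigma> a \<xi> x)"
    by (rule is_l2_diff(1)[OF tt(3) tt(1)])
  show "(\<Sum>\<^sub>\<infinity>x. (norm (twisted_translate k' \<sigma>' a \<xi> x - twisted_translate k \<sigma> a \<xi> x))\<^sup>2)
      \<le> 4 * (\<Sum>\<^sub>\<infinity>x. (norm (\<xi> x))\<^sup>2)"
    using is_l2_diff(2)[OF tt(3) tt(1)] unfolding tt(2) tt(4) by linarith
  show "norm (twisted_translate k' \<sigma>' a \<xi> x - twisted_translate k \<sigma> a \<xi> x) \<le> 2 * l2_norm \<xi>"
    using norm_triangle_ineq4[of "twisted_translate k' \<sigma>' a \<xi> x" "twisted_translate k \<sigma> a \<xi> x"]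
      norm_le_l2_norm[OF assms(3), of "translate k a x"] norm_le_l2_norm[OF assms(3), of "translate k' a x"]
    unfolding norm_twisted_translate[OF \<sigma>(1)] norm_twisted_translate[OF \<sigma>(2)] by linarith
qed

lemma twisted_translate_l2_tendsto:
  assumes "Xi k \<sigma>" "\<And>i. Xi (ks i) (\<sigma>s i)" "Xi_converges ks \<sigma>s k \<sigma>" "is_l2 \<xi>"
  shows "(\<lambda>i. \<Sum>\<^sub>\<infinity>x. (norm (twisted_translate (ks i) (\<sigma>s i) a \<xi> x - twisted_translate k \<sigma> a \<xi> x))\<^sup>2)
    \<longlonglongrightarrow> 0"
proof (rule l2_tendsto_if_pointwise_and_norms_eq)
  show "is_l2 (twisted_translate k \<sigma> a \<xi>)" "is_l2 (twisted_translate (ks i) (\<sigma>s i) a \<xi>)" for i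
    using twisted_translate_l2(1) assms by blast+
  show "(\<Sum>\<^sub>\<infinity>x. (norm (twisted_translate (ks i) (\<sigma>s i) a \<xi> x))\<^sup>2)
      = (\<Sum>\<^sub>\<infinity>x. (norm (twisted_translate k \<sigma> a \<xi> x))\<^sup>2)" for i
    unfolding twisted_translate_l2(2)[OF assms(2,4)] twisted_translate_l2(2)[OF assms(1,4)] ..
  show "(\<lambda>i. twisted_translate (ks i) (\<sigma>s i) a \<xi> x) \<longlonglongrightarrow> twisted_translate k \<sigma> a \<xi> x" for x
    by (rule twisted_translate_tendsto[OF assms(3) Xi_pos_periods[OF assms(2)] Xi_pos_periods[OF assms(1)]])
qed

theorem mainTheorem3:
  fixes ks :: "nat \<Rightarrow> enat ^ 'd"
    and \<sigma>s :: "nat \<Rightarrow> int ^ 'd \<Rightarrow> int ^ 'd \<Rightarrow> complex"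
    and k :: "enat ^ 'd"
    and \<sigma> :: "int ^ 'd \<Rightarrow> int ^ 'd \<Rightarrow> complex"
    and f :: "int ^ 'd \<Rightarrow> complex"
  assumes "CARD('d) \<ge> 2"
    and "Xi k \<sigma>"
    and "\<And>i. Xi (ks i) (\<sigma>s i)"
    and "Xi_converges ks \<sigma>s k \<sigma>"
    and "(\<lambda>x. norm (f x)) summable_on UNIV"
  shows "\<forall>\<xi>. is_l2 \<xi> \<longrightarrow>
    (\<lambda>i. l2_norm (\<lambda>x. pi_op (ks i) (\<sigma>s i) (upsilon (ks i) f) \<xi> x
                       - pi_op k \<sigma> (upsilon k f) \<xi> x)) \<longlonglongrightarrow> 0"
proof (intro allI impI)
  fix \<xi> :: "int ^ 'd \<Rightarrow> complex"
  assume \<xi>: "is_l2 \<xi>"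
  note Xi = assms(2) and Xis = assms(3) and f = assms(5)
  define v where "v i a = (\<lambda>x. twisted_translate (ks i) (\<sigma>s i) a \<xi> x - twisted_translate k \<sigma> a \<xi> x)"
    for i a
  have "(\<lambda>i. \<Sum>\<^sub>\<infinity>x. (norm (\<Sum>\<^sub>\<infinity>a. f a * v i a x))\<^sup>2) \<longlonglongrightarrow> 0"
  proof (rule l2_infsum_mult_tendsto_0[OF f])
    show "norm (v i a x) \<le> 2 * l2_norm \<xi>" for i a x
      unfolding v_def by (rule twisted_translate_diff_l2(3)[OF Xi Xis \<xi>])
    show "is_l2 (v i a)" for i a
      unfolding v_def by (rule twisted_translate_diff_l2(1)[OF Xi Xis \<xi>])
    show "(\<Sum>\<^sub>\<infinity>x. (norm (v i a x))\<^sup>2) \<le> 4 * (\<Sum>\<^sub>\<infinity>x. (norm (\<xi> x))\<^sup>2)" for i a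
      unfolding v_def by (rule twisted_translate_diff_l2(2)[OF Xi Xis \<xi>])
    show "(\<lambda>i. \<Sum>\<^sub>\<infinity>x. (norm (v i a x))\<^sup>2) \<longlonglongrightarrow> 0" for a
      unfolding v_def by (rule twisted_translate_l2_tendsto[OF Xi Xis assms(4) \<xi>])
  qed
  moreover have "pi_op (ks i) (\<sigma>s i) (upsilon (ks i) f) \<xi> x - pi_op k \<sigma> (upsilon k f) \<xi> x
      = (\<Sum>\<^sub>\<infinity>a. f a * v i a x)" for i x
    unfolding v_def by (rule pi_op_upsilon_diff_eq_infsum[OF Xi Xis f \<xi>])
  ultimately show "(\<lambda>i. l2_norm (\<lambda>x. pi_op (ks i) (\<sigma>s i) (upsilon (ks i) f) \<xi> x
                       - pi_op k \<sigma> (upsilon k f) \<xi> x)) \<longlonglongrightarrow> 0"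
    unfolding l2_norm_def using tendsto_real_sqrt[of _ 0] by auto
qed

end
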